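(* Let $\theta>0$, $\lambda>0$, $\mu>0$, $e\ge 0$. Let $$\pi(\alpha,d)=(\theta+\mu)\alpha-\frac{\alpha^2}{2}-\frac{\alpha}{\alpha+d}\lambda\alpha\theta-d,$$ and let $d^*(\alpha)$ be the firm's privately optimal security investment, $d^*(\alpha)=0$ if $\lambda\theta\le1$ and $d^*(\alpha)=\alpha(\sqrt{\lambda\theta}-1)$ if $\lambda\theta>1$. Define $$W_{SB}(\alpha)=\pi(\alpha,d^*(\alpha))-e\,\frac{\alpha}{\alpha+d^*(\alpha)}\,\lambda\alpha\theta .$$ Then the maximizer of $W_{SB}$ over $\alpha\ge 0$ (second-best deployment) is $$\alpha^{**}_{SB}(\theta)=\max\!\left\{0,\;\begin{cases}\mu+\theta\big(1-(1+e)\lambda\big), & \lambda\theta\le 1,\\ \theta+\mu+1-(2+e)\sqrt{\lambda\theta}, & \lambda\theta>1.\end{cases}\right\}$$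
   Context: A regulator chooses deployment $\alpha$ while the firm privately chooses security investment $d$ to maximize $\pi(\alpha,\cdot)$. $\theta$ is capability, $\lambda$ breach-loss magnitude, $\mu$ organizational readiness, $e$ the breach externality parameter (social breach damage is $(1+e)$ times private expected loss $\frac{\alpha}{\alpha+d}\lambda\alpha\theta$). *)

theory Defs
  imports Complex_Main
begin

definition profit :: "real \<Rightarrow> real \<Rightarrow> real \<Rightarrow> real \<Rightarrow> real \<Rightarrow> real" where
  "profit \<theta> lam \<mu> \<alpha> d =
     (\<theta> + \<mu>) * \<alpha> - \<alpha>^2 / 2 - (\<alpha> / (\<alpha> + d)) * lam * \<alpha> * \<theta> - d"

definition dstar :: "real \<Rightarrow> real \<Rightarrow> real \<Rightarrow> real" where
  "dstar \<theta> lam \<alpha> = (if lam * \<theta> \<le> 1 then 0 else \<alpha> * (sqrt (lam * \<theta>) - 1))"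

definition W_SB :: "real \<Rightarrow> real \<Rightarrow> real \<Rightarrow> real \<Rightarrow> real \<Rightarrow> real" where
  "W_SB \<theta> lam \<mu> e \<alpha> =
     profit \<theta> lam \<mu> \<alpha> (dstar \<theta> lam \<alpha>)
     - e * (\<alpha> / (\<alpha> + dstar \<theta> lam \<alpha>)) * lam * \<alpha> * \<theta>"

definition alpha_SB :: "real \<Rightarrow> real \<Rightarrow> real \<Rightarrow> real \<Rightarrow> real" where
  "alpha_SB \<theta> lam \<mu> e = max 0
     (if lam * \<theta> \<le> 1 then \<mu> + \<theta> * (1 - (1 + e) * lam)
      else \<theta> + \<mu> + 1 - (2 + e) * sqrt (lam * \<theta>))"

end

theory Submission
  imports Defs
begin

text \<open>Once the firm best-responds, the breach probability \<alpha>/(\<alpha> + d*(\<alpha>)) no longer depends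
on \<alpha> (it is 1 without security investment and 1/sqrt(\<lambda>\<theta>) otherwise), so second-best welfare
is the concave quadratic c \<alpha> - \<alpha>^2/2 whose slope c is the bracket in the formula for
\<alpha>**_SB. Its unique maximiser on [0, \<infinity>) is max 0 c. The quadratic form of welfare holds
for all parameter values (at \<alpha> = 0 both sides vanish because x/0 = 0).\<close>

definition deployment_slope :: "real \<Rightarrow> real \<Rightarrow> real \<Rightarrow> real \<Rightarrow> real" where
  "deployment_slope \<theta> lam \<mu> e =
     (if lam * \<theta> \<le> 1 then \<mu> + \<theta> * (1 - (1 + e) * lam)
      else \<theta> + \<mu> + 1 - (2 + e) * sqrt (lam * \<theta>))"

lemma alpha_SB_eq_max_deployment_slope:
  "alpha_SB \<theta> lam \<mu> e = max 0 (deployment_slope \<theta> lam \<mu> e)"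
  unfolding alpha_SB_def deployment_slope_def ..

lemma W_SB_no_security:
  assumes "lam * \<theta> \<le> 1"
  shows "W_SB \<theta> lam \<mu> e \<alpha> = (\<mu> + \<theta> * (1 - (1 + e) * lam)) * \<alpha> - \<alpha>\<^sup>2 / 2"
  using assms by (cases "\<alpha> = 0") (simp_all add: W_SB_def profit_def dstar_def field_simps)

lemma W_SB_with_security:
  assumes "lam * \<theta> > 1"
  shows "W_SB \<theta> lam \<mu> e \<alpha> = (\<theta> + \<mu> + 1 - (2 + e) * sqrt (lam * \<theta>)) * \<alpha> - \<alpha>\<^sup>2 / 2"
proof (cases "\<alpha> = 0")
  case True
  then show ?thesis by (simp add: W_SB_def profit_def dstar_def)
next
  case False
  define s where "s = sqrt (lam * \<theta>)"
  have "s > 1"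
    using assms by (simp add: s_def real_less_rsqrt)
  have s_sq: "lam * \<theta> = s * s"
    using assms by (simp add: s_def)
  have "\<alpha> + dstar \<theta> lam \<alpha> = \<alpha> * s"
    using assms by (simp add: dstar_def s_def algebra_simps)
  then have "\<alpha> / (\<alpha> + dstar \<theta> lam \<alpha>) * lam * \<alpha> * \<theta> = (lam * \<theta>) * \<alpha> / s"
    using False \<open>s > 1\<close> by (simp add: field_simps)
  then have breach_loss: "\<alpha> / (\<alpha> + dstar \<theta> lam \<alpha>) * lam * \<alpha> * \<theta> = s * \<alpha>"
    using \<open>s > 1\<close> by (simp add: s_sq)
  have "W_SB \<theta> lam \<mu> e \<alpha> = (\<theta> + \<mu>) * \<alpha> - \<alpha>\<^sup>2 / 2
      - (1 + e) * (\<alpha> / (\<alpha> + dstar \<theta> lam \<alpha>) * lam * \<alpha> * \<theta>) - dstar \<theta> lam \<alpha>"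
    unfolding W_SB_def profit_def by (simp add: algebra_simps add_divide_distrib)
  also have "\<dots> = (\<theta> + \<mu>) * \<alpha> - \<alpha>\<^sup>2 / 2 - (1 + e) * (s * \<alpha>) - \<alpha> * (s - 1)"
    using assms by (simp only: breach_loss) (simp add: dstar_def s_def)
  finally show ?thesis
    by (simp add: s_def algebra_simps)
qed

lemma W_SB_eq_quadratic:
  "W_SB \<theta> lam \<mu> e \<alpha> = deployment_slope \<theta> lam \<mu> e * \<alpha> - \<alpha>\<^sup>2 / 2"
  by (simp add: deployment_slope_def W_SB_no_security W_SB_with_security)

lemma concave_quadratic_strict_argmax_nonneg:
  fixes c x :: real
  assumes "x \<ge> 0" and "x \<noteq> max 0 c"
  shows "c * x - x\<^sup>2 / 2 < c * max 0 c - (max 0 c)\<^sup>2 / 2"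
proof (cases "c \<ge> 0")
  case True
  then have "(x - c)\<^sup>2 > 0"
    using assms by simp
  then show ?thesis
    using True by (simp add: power2_eq_square algebra_simps)
next
  case False
  then show ?thesis
    using assms by (simp add: power2_eq_square)
qed

theorem proposition7:
  fixes \<theta> lam \<mu> e :: real
  assumes "\<theta> > 0" and "lam > 0" and "\<mu> > 0" and "e \<ge> 0"
  shows "alpha_SB \<theta> lam \<mu> e \<ge> 0 \<and>
         (\<forall>\<alpha>\<ge>0. \<alpha> \<noteq> alpha_SB \<theta> lam \<mu> e \<longrightarrow>
              W_SB \<theta> lam \<mu> e \<alpha> < W_SB \<theta> lam \<mu> e (alpha_SB \<theta> lam \<mu> e))"
  unfolding alpha_SB_eq_max_deployment_slope W_SB_eq_quadratic
  using concave_quadratic_strict_argmax_nonneg by auto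

end
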